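(* Let $k<\omega$ and let $\chi$ be an infinite cardinal with $\chi^{\aleph_0}=\chi$. For $\ell\le k$ let $S_\ell=\beth_\ell(\chi)$ (as a set of ordinals), and let $\Lambda=\prod_{\ell\le k}{}^\omega(S_\ell)$. Then there is a family $\langle\alpha_{\bar\eta,m,n}:\bar\eta\in\Lambda,\ m\le k,\ n<\omega\rangle$ of ordinals $\alpha_{\bar\eta,m,n}<\chi$ such that for every function $h:\Lambda_{\le k}\to\chi$ and every sequence $\langle\gamma_\ell:\ell\le k\rangle$ with $\gamma_\ell<\beth_\ell(\chi)$, there is $\bar\eta\in\Lambda$ with $\eta_\ell(0)=\gamma_\ell$ for all $\ell\le k$ and $h(\bar\eta\upharpoonleft\langle m,n\rangle)=\alpha_{\bar\eta,m,n}$ for all $m\le k$ and $n<\omega$.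
   Context: $\beth_0(\chi)=\chi$, $\beth_{\ell+1}(\chi)=2^{\beth_\ell(\chi)}$. For a set $X$, ${}^\omega X$ is the set of functions $\omega\to X$; $\Lambda$ consists of sequences $\bar\eta=\langle\eta_0,\dots,\eta_k\rangle$ with $\eta_\ell\in{}^\omega(S_\ell)$. For $\bar\eta\in\Lambda$, $m\le k$, $n<\omega$, $\bar\eta\upharpoonleft\langle m,n\rangle$ is the sequence obtained from $\bar\eta$ by replacing $\eta_m$ with its restriction $\eta_m\restriction n$ (a finite sequence). $\Lambda_m=\{\bar\eta\upharpoonleft\langle m,n\rangle:\bar\eta\in\Lambda,n<\omega\}$ and $\Lambda_{\le k}=\bigcup_{m\le k}\Lambda_m$. *)

theory Defs
  imports Main "HOL-Library.Equipollence"
begin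

text \<open>A sequence eta-bar = (eta_0,...,eta_k) is a function eta :: nat => nat => 'a,
  eta l being the omega-sequence eta_l.  Lambda = prod_{l<=k} omega(S_l).\<close>
definition Lam :: "nat \<Rightarrow> (nat \<Rightarrow> 'a set) \<Rightarrow> (nat \<Rightarrow> nat \<Rightarrow> 'a) set" where
  "Lam k S = (\<Pi>\<^sub>E l\<in>{..k}. (UNIV :: nat set) \<rightarrow> S l)"

text \<open>eta-bar restricted at <m,n>: coordinate m replaced by the finite sequence
  eta_m|n (a list); encoded as (m, eta_m|n, the other coordinates).\<close>
definition restr :: "(nat \<Rightarrow> nat \<Rightarrow> 'a) \<Rightarrow> nat \<Rightarrow> nat \<Rightarrow> nat \<times> 'a list \<times> (nat \<Rightarrow> nat \<Rightarrow> 'a)" where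
  "restr eta m n = (m, map (eta m) [0..<n], eta(m := undefined))"

definition Lam_le :: "nat \<Rightarrow> (nat \<Rightarrow> 'a set) \<Rightarrow> (nat \<times> 'a list \<times> (nat \<Rightarrow> nat \<Rightarrow> 'a)) set" where
  "Lam_le k S = {restr eta m n | eta m n. eta \<in> Lam k S \<and> m \<le> k}"

end

theory Submission
  imports Defs
begin

text \<open>For each \<open>m \<le> k\<close>, every function from the lower coordinates
  \<open>\<Pi> l<m. \<omega>(S l)\<close> to \<open>S 0\<close> can be coded by an element of \<open>S m\<close>: for \<open>m > 0\<close> the lower coordinates
  number at most \<open>|S (m-1)|\<close>, because \<open>\<chi>^\<aleph>\<^sub>0 = \<chi>\<close> and \<open>(2^\<lambda>)^\<aleph>\<^sub>0 = 2^\<lambda>\<close> for infinite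
  \<open>\<lambda>\<close>, so there are at most \<open>2^|S (m-1)| = |S m|\<close> such functions.
  Given \<open>h\<close> and \<open>\<gamma>\<close>, build \<open>\<eta>\<close> from the top coordinate downwards, each \<open>\<eta> m\<close> entry
  by entry: \<open>\<eta> m (n+1)\<close> codes the function sending lower coordinates \<open>d\<close> to the value
  of \<open>h\<close> at \<open>restr \<eta> m n\<close> with its coordinates below \<open>m\<close> replaced by \<open>d\<close>. That value
  depends only on \<open>\<eta> m\<close> below \<open>n\<close> and on the coordinates above \<open>m\<close>, which are already
  built. Decoding \<open>\<eta> m (n+1)\<close> and applying it to the actual lower coordinates of \<open>\<eta>\<close>
  recovers \<open>h (restr \<eta> m n)\<close>; this decoded value is \<open>\<alpha> \<eta> m n\<close>.\<close>

lemma infinite_Times_self_eqpoll: "infinite A \<Longrightarrow> A \<times> A \<approx> A"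
  unfolding eqpoll_iff_card_of_ordIso by (rule card_of_Times_same_infinite)

lemma lepoll_surjection_onto:
  assumes "A \<lesssim> B" and "A \<noteq> {}"
  obtains g where "g ` B = A"
  using assms by (metis card_of_ordLeq card_of_ordLeq2 lepoll_def)

lemma Pow_lepoll_mono:
  assumes "A \<lesssim> B" shows "Pow A \<lesssim> Pow B"
proof -
  obtain f where "inj_on f A" "f ` A \<subseteq> B"
    using assms unfolding lepoll_def by blast
  then have "inj_on (image f) (Pow A)" "image f ` Pow A \<subseteq> Pow B"
    by (auto intro: inj_on_image_Pow)
  then show ?thesis
    unfolding lepoll_def by blast
qed

lemma funcset_UNIV_lepoll_mono:
  "A \<lesssim> B \<Longrightarrow> (UNIV :: 'i set) \<rightarrow> A \<lesssim> (UNIV :: 'i set) \<rightarrow> B"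
  using lepoll_funcset_right by (metis PiE_UNIV_domain)

lemma funcset_UNIV_Pow_lepoll: "(UNIV :: 'i set) \<rightarrow> Pow X \<lesssim> Pow ((UNIV :: 'i set) \<times> X)"
proof -
  have "inj_on (\<lambda>f. {(i, x). x \<in> f i}) ((UNIV :: 'i set) \<rightarrow> Pow X)"
  proof (rule inj_onI)
    fix f g :: "'i \<Rightarrow> _"
    assume graph: "{(i, x). x \<in> f i} = {(i, x). x \<in> g i}"
    show "f = g"
    proof
      fix i
      show "f i = g i"
        using graph by (auto simp: set_eq_iff)
    qed
  qed
  moreover have "(\<lambda>f. {(i, x). x \<in> f i}) ` ((UNIV :: 'i set) \<rightarrow> Pow X) \<subseteq> Pow (UNIV \<times> X)"
    by (auto simp: Pi_iff)
  ultimately show ?thesis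
    by (meson lepoll_def)
qed

lemma PiE_lepoll_Pow_Times: "A \<rightarrow>\<^sub>E B \<lesssim> Pow (A \<times> B)"
proof -
  have "inj_on (\<lambda>f. (\<lambda>x. (x, f x)) ` A) (A \<rightarrow>\<^sub>E B)"
  proof (rule inj_onI)
    fix f g
    assume f: "f \<in> A \<rightarrow>\<^sub>E B" and g: "g \<in> A \<rightarrow>\<^sub>E B"
      and graph: "(\<lambda>x. (x, f x)) ` A = (\<lambda>x. (x, g x)) ` A"
    show "f = g"
    proof (rule PiE_ext[OF f g])
      fix x assume "x \<in> A"
      then have "(x, f x) \<in> (\<lambda>x. (x, g x)) ` A"
        using graph by blast
      then show "f x = g x" by blast
    qed
  qed
  moreover have "(\<lambda>f. (\<lambda>x. (x, f x)) ` A) ` (A \<rightarrow>\<^sub>E B) \<subseteq> Pow (A \<times> B)"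
    by blast
  ultimately show ?thesis
    by (meson lepoll_def)
qed

lemma PiE_insert_lepoll: "Pi\<^sub>E (insert x A) T \<lesssim> T x \<times> Pi\<^sub>E A T"
  unfolding PiE_insert_eq by (rule image_lepoll)

lemma funcset_nat_Pow_lepoll:
  assumes "infinite A"
  shows "(UNIV :: nat set) \<rightarrow> Pow A \<lesssim> Pow A"
proof -
  have "(UNIV :: nat set) \<times> A \<lesssim> A \<times> A"
    using assms by (intro times_lepoll_mono) (auto simp: infinite_le_lepoll)
  also have "A \<times> A \<approx> A"
    using assms by (rule infinite_Times_self_eqpoll)
  finally have "(UNIV :: nat set) \<times> A \<lesssim> A" .
  with funcset_UNIV_Pow_lepoll show ?thesis
    by (rule lepoll_trans[OF _ Pow_lepoll_mono])
qed

function descending_rec ::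
    "nat \<Rightarrow> (nat \<Rightarrow> 'a) \<Rightarrow> (nat \<Rightarrow> 'a list \<Rightarrow> (nat \<Rightarrow> nat \<Rightarrow> 'a) \<Rightarrow> 'a) \<Rightarrow> nat \<Rightarrow> nat \<Rightarrow> 'a" where
  "descending_rec k start F m 0 = start m"
| "descending_rec k start F m (Suc n) =
     F m (map (\<lambda>j. descending_rec k start F m j) [0..<n])
       (\<lambda>l. if m < l \<and> l \<le> k then (\<lambda>j. descending_rec k start F l j) else undefined)"
  by pat_completeness auto
termination
  by (relation "measures [\<lambda>(k, _, _, m, _). k - m, \<lambda>(_, _, _, _, i). i]") auto

lemma descending_recursion:
  fixes start :: "nat \<Rightarrow> 'a" and F :: "nat \<Rightarrow> 'a list \<Rightarrow> (nat \<Rightarrow> nat \<Rightarrow> 'a) \<Rightarrow> 'a"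
  obtains \<eta> where "\<And>l. k < l \<Longrightarrow> \<eta> l = undefined"
    and "\<And>l. l \<le> k \<Longrightarrow> \<eta> l 0 = start l"
    and "\<And>m n. m \<le> k \<Longrightarrow>
           \<eta> m (Suc n) = F m (map (\<eta> m) [0..<n]) (\<lambda>l. if m < l then \<eta> l else undefined)"
proof
  let ?\<eta> = "\<lambda>l. if l \<le> k then descending_rec k start F l else undefined"
  show "?\<eta> l = undefined" if "k < l" for l
    using that by simp
  show "?\<eta> l 0 = start l" if "l \<le> k" for l
    using that by simp
  show "?\<eta> m (Suc n) = F m (map (?\<eta> m) [0..<n]) (\<lambda>l. if m < l then ?\<eta> l else undefined)"
    if "m \<le> k" for m n
    using that by (auto intro!: arg_cong[where f = "F m _"])
qed

definition Lam_prefix :: "nat \<Rightarrow> (nat \<Rightarrow> 'a set) \<Rightarrow> (nat \<Rightarrow> nat \<Rightarrow> 'a) set" where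
  "Lam_prefix m S = (\<Pi>\<^sub>E l\<in>{..<m}. (UNIV :: nat set) \<rightarrow> S l)"

lemma restrict_in_Lam_prefix:
  assumes "eta \<in> Lam k S" and "m \<le> Suc k"
  shows "restrict eta {..<m} \<in> Lam_prefix m S"
  using assms by (auto simp: Lam_def Lam_prefix_def PiE_iff)

lemma Lam_prefix_Suc_lepoll_Times: "Lam_prefix (Suc m) S \<lesssim> ((UNIV :: nat set) \<rightarrow> S m) \<times> Lam_prefix m S"
  unfolding Lam_prefix_def lessThan_Suc by (rule PiE_insert_lepoll)

locale beth_tower =
  fixes k :: nat and S :: "nat \<Rightarrow> 'a set"
  assumes infinite_base: "infinite (S 0)"
    and funcset_nat_base: "(UNIV :: nat set) \<rightarrow> S 0 \<approx> S 0"
    and Pow_step: "\<forall>l<k. S (Suc l) \<approx> Pow (S l)"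
begin

lemma S_lepoll_mono: "l \<le> m \<Longrightarrow> m \<le> k \<Longrightarrow> S l \<lesssim> S m"
proof (induction m rule: dec_induct)
  case (step m)
  then have "S m \<lesssim> S (Suc m)"
    using Pow_step lepoll_Pow_self eqpoll_sym lepoll_trans2 by (metis Suc_le_lessD)
  with step show ?case
    by (meson Suc_leD lepoll_trans)
qed simp

lemma S_infinite: "m \<le> k \<Longrightarrow> infinite (S m)"
  using infinite_base S_lepoll_mono[of 0 m] lepoll_trans by (auto simp: infinite_le_lepoll)

lemma funcset_nat_S_lepoll: "m \<le> k \<Longrightarrow> (UNIV :: nat set) \<rightarrow> S m \<lesssim> S m"
proof (cases m)
  case 0
  then show ?thesis
    using funcset_nat_base by (simp add: eqpoll_imp_lepoll)
next
  case (Suc l)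
  assume "m \<le> k"
  with Suc have S_m: "S m \<approx> Pow (S l)"
    using Pow_step by simp
  then have "(UNIV :: nat set) \<rightarrow> S m \<lesssim> (UNIV :: nat set) \<rightarrow> Pow (S l)"
    by (intro funcset_UNIV_lepoll_mono eqpoll_imp_lepoll)
  also have "\<dots> \<lesssim> Pow (S l)"
    using S_infinite \<open>m \<le> k\<close> Suc by (intro funcset_nat_Pow_lepoll) simp
  also have "\<dots> \<approx> S m"
    using S_m by (rule eqpoll_sym)
  finally show ?thesis .
qed

lemma Lam_prefix_Suc_lepoll_S: "m \<le> k \<Longrightarrow> Lam_prefix (Suc m) S \<lesssim> S m"
proof (induction m)
  case 0
  have "Lam_prefix (Suc 0) S \<lesssim> ((UNIV :: nat set) \<rightarrow> S 0) \<times> Lam_prefix 0 S"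
    by (rule Lam_prefix_Suc_lepoll_Times)
  also have "\<dots> \<approx> (UNIV :: nat set) \<rightarrow> S 0"
    unfolding Lam_prefix_def
    by (metis PiE_empty_domain lessThan_0 times_commute_eqpoll times_singleton_eqpoll eqpoll_trans)
  also have "\<dots> \<approx> S 0"
    by (rule funcset_nat_base)
  finally show ?case .
next
  case (Suc m)
  have "Lam_prefix (Suc (Suc m)) S \<lesssim> ((UNIV :: nat set) \<rightarrow> S (Suc m)) \<times> Lam_prefix (Suc m) S"
    by (rule Lam_prefix_Suc_lepoll_Times)
  also have "\<dots> \<lesssim> S (Suc m) \<times> S (Suc m)"
    using Suc funcset_nat_S_lepoll S_lepoll_mono[of m "Suc m"]
    by (intro times_lepoll_mono) (auto intro: lepoll_trans)
  also have "\<dots> \<approx> S (Suc m)"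
    using Suc.prems S_infinite by (intro infinite_Times_self_eqpoll)
  finally show ?case .
qed

lemma Lam_prefix_funcset_lepoll_S: "m \<le> k \<Longrightarrow> Lam_prefix m S \<rightarrow>\<^sub>E S 0 \<lesssim> S m"
proof (cases m)
  case 0
  then show ?thesis
    by (simp add: Lam_prefix_def PiE_sing_eqpoll_self eqpoll_imp_lepoll)
next
  case (Suc l)
  assume "m \<le> k"
  with Suc have "l \<le> k" "S m \<approx> Pow (S l)"
    using Pow_step by auto
  have "Lam_prefix m S \<rightarrow>\<^sub>E S 0 \<lesssim> Pow (Lam_prefix m S \<times> S 0)"
    by (rule PiE_lepoll_Pow_Times)
  also have "\<dots> \<lesssim> Pow (S l \<times> S l)"
    using Lam_prefix_Suc_lepoll_S S_lepoll_mono \<open>l \<le> k\<close> Suc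
    by (intro Pow_lepoll_mono times_lepoll_mono) auto
  also have "\<dots> \<lesssim> Pow (S l)"
    using S_infinite \<open>l \<le> k\<close> by (intro Pow_lepoll_mono eqpoll_imp_lepoll infinite_Times_self_eqpoll)
  also have "\<dots> \<approx> S m"
    using \<open>S m \<approx> Pow (S l)\<close> by (rule eqpoll_sym)
  finally show ?thesis .
qed

lemma surjective_decoding_exists:
  obtains dec :: "nat \<Rightarrow> 'a \<Rightarrow> (nat \<Rightarrow> nat \<Rightarrow> 'a) \<Rightarrow> 'a"
  where "\<And>m. m \<le> k \<Longrightarrow> dec m ` S m = Lam_prefix m S \<rightarrow>\<^sub>E S 0"
proof -
  have "\<forall>m\<in>{..k}. \<exists>g. g ` S m = Lam_prefix m S \<rightarrow>\<^sub>E S 0"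
    using Lam_prefix_funcset_lepoll_S infinite_base
    by (metis atMost_iff lepoll_surjection_onto PiE_eq_empty_iff finite.emptyI)
  then obtain dec where "\<forall>m\<in>{..k}. dec m ` S m = Lam_prefix m S \<rightarrow>\<^sub>E S 0"
    by (rule bchoice[THEN exE])
  then show ?thesis
    using that[of dec] by simp
qed

end

lemma exists_self_decoding_branch:
  fixes S :: "nat \<Rightarrow> 'a set" and h :: "nat \<times> 'a list \<times> (nat \<Rightarrow> nat \<Rightarrow> 'a) \<Rightarrow> 'a"
    and dec :: "nat \<Rightarrow> 'a \<Rightarrow> (nat \<Rightarrow> nat \<Rightarrow> 'a) \<Rightarrow> 'a"
  assumes dec: "\<And>m. m \<le> k \<Longrightarrow> Lam_prefix m S \<rightarrow>\<^sub>E S 0 \<subseteq> dec m ` S m"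
    and h: "range h \<subseteq> S 0"
    and \<gamma>: "\<And>l. l \<le> k \<Longrightarrow> \<gamma> l \<in> S l"
  obtains eta where "eta \<in> Lam k S" and "\<And>l. l \<le> k \<Longrightarrow> eta l 0 = \<gamma> l"
    and "\<And>m n. m \<le> k \<Longrightarrow> h (restr eta m n) = dec m (eta m (Suc n)) (restrict eta {..<m})"
proof -
  define guess where
    "guess m L u = (\<lambda>d\<in>Lam_prefix m S. h (m, L, \<lambda>l. if l < m then d l else u l))" for m L u
  define code where "code m L u = inv_into (S m) (dec m) (guess m L u)" for m L u
  have guess_in_image: "guess m L u \<in> dec m ` S m" if "m \<le> k" for m L u
  proof -
    have "guess m L u \<in> Lam_prefix m S \<rightarrow>\<^sub>E S 0"
      using h by (auto simp: guess_def)
    with dec[OF that] show ?thesis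
      by blast
  qed
  obtain eta where eta_undefined: "\<And>l. k < l \<Longrightarrow> eta l = undefined"
    and eta_0: "\<And>l. l \<le> k \<Longrightarrow> eta l 0 = \<gamma> l"
    and eta_Suc: "\<And>m n. m \<le> k \<Longrightarrow>
      eta m (Suc n) = code m (map (eta m) [0..<n]) (\<lambda>l. if m < l then eta l else undefined)"
    using descending_recursion[where start = \<gamma> and F = code] by blast
  have "eta l i \<in> S l" if "l \<le> k" for l i
    using that \<gamma> guess_in_image by (cases i) (auto simp: eta_0 eta_Suc code_def inv_into_into)
  then have eta_Lam: "eta \<in> Lam k S"
    by (auto simp: Lam_def PiE_iff eta_undefined extensional_def)
  show thesis
  proof (rule that[OF eta_Lam eta_0])
    fix m n assume "m \<le> k"
    have "(\<lambda>l. if l < m then restrict eta {..<m} l else if m < l then eta l else undefined)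
        = eta(m := undefined)"
      by auto
    then have "restr eta m n = (m, map (eta m) [0..<n],
        \<lambda>l. if l < m then restrict eta {..<m} l else if m < l then eta l else undefined)"
      by (simp add: restr_def)
    then show "h (restr eta m n) = dec m (eta m (Suc n)) (restrict eta {..<m})"
      using \<open>m \<le> k\<close> guess_in_image restrict_in_Lam_prefix[OF eta_Lam, of m]
      by (simp add: eta_Suc code_def f_inv_into_f guess_def)
  qed
qed

theorem claim2p1:
  fixes k :: nat and S :: "nat \<Rightarrow> 'a set"
  assumes chi_inf: "infinite (S 0)"
    and chi_omega: "((UNIV :: nat set) \<rightarrow> S 0) \<approx> S 0"
    and beth: "\<forall>l<k. S (Suc l) \<approx> Pow (S l)"
  shows "\<exists>\<alpha> :: (nat \<Rightarrow> nat \<Rightarrow> 'a) \<Rightarrow> nat \<Rightarrow> nat \<Rightarrow> 'a.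
           (\<forall>eta\<in>Lam k S. \<forall>m\<le>k. \<forall>n. \<alpha> eta m n \<in> S 0) \<and>
           (\<forall>h. h ` Lam_le k S \<subseteq> S 0 \<longrightarrow>
              (\<forall>\<gamma>. (\<forall>l\<le>k. \<gamma> l \<in> S l) \<longrightarrow>
                 (\<exists>eta\<in>Lam k S. (\<forall>l\<le>k. eta l 0 = \<gamma> l) \<and>
                    (\<forall>m\<le>k. \<forall>n. h (restr eta m n) = \<alpha> eta m n))))"
proof -
  interpret beth_tower k S
    using assms by unfold_locales
  obtain dec where dec: "\<And>m. m \<le> k \<Longrightarrow> dec m ` S m = Lam_prefix m S \<rightarrow>\<^sub>E S 0"
    using surjective_decoding_exists by blast
  define \<alpha> where "\<alpha> eta m n = dec m (eta m (Suc n)) (restrict eta {..<m})" for eta m n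
  have "\<alpha> eta m n \<in> S 0" if "eta \<in> Lam k S" "m \<le> k" for eta m n
    using dec[OF \<open>m \<le> k\<close>] restrict_in_Lam_prefix[OF that(1), of m] that
    by (force simp: \<alpha>_def Lam_def)
  moreover have "\<exists>eta\<in>Lam k S. (\<forall>l\<le>k. eta l 0 = \<gamma> l) \<and> (\<forall>m\<le>k. \<forall>n. h (restr eta m n) = \<alpha> eta m n)"
    if h: "h ` Lam_le k S \<subseteq> S 0" and \<gamma>: "\<forall>l\<le>k. \<gamma> l \<in> S l" for h \<gamma>
  proof -
    define h' where "h' x = (if x \<in> Lam_le k S then h x else \<gamma> 0)" for x
    have "range h' \<subseteq> S 0"
      using h \<gamma> by (auto simp: h'_def)
    moreover have "Lam_prefix m S \<rightarrow>\<^sub>E S 0 \<subseteq> dec m ` S m" if "m \<le> k" for m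
      using dec[OF that] by simp
    ultimately obtain eta where "eta \<in> Lam k S" "\<And>l. l \<le> k \<Longrightarrow> eta l 0 = \<gamma> l"
      and "\<And>m n. m \<le> k \<Longrightarrow> h' (restr eta m n) = \<alpha> eta m n"
      using exists_self_decoding_branch[of k S dec h' \<gamma>] \<gamma> unfolding \<alpha>_def by blast
    moreover have "restr eta m n \<in> Lam_le k S" if "m \<le> k" for m n
      using \<open>eta \<in> Lam k S\<close> that by (auto simp: Lam_le_def)
    ultimately show ?thesis
      by (auto simp: h'_def)
  qed
  ultimately show ?thesis
    by blast
qed

end
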